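(* Let $z_{1},\ldots,z_{D'}$ be distinct points of $\mathbb{R}^{d}$ and let $D^{+}\geq2D'-1$. Consider the multivariate Hermite matrix whose columns are indexed by $\alpha\in\mathcal{I}_{D^{+}}$ and whose rows are the $D'$ rows $(p_{\alpha}(z_{i}))_{\alpha}$, $i=1,\ldots,D'$, followed by the $dD'$ rows given by the gradients $(\nabla p_{\alpha}(z_{i}))_{\alpha}$, $i=1,\ldots,D'$ (each gradient contributing $d$ rows, one per partial derivative). Then the rank of this matrix equals its number of rows, $D'(d+1)$.
   Context: For a multi-index $\alpha=(\alpha_{1},\ldots,\alpha_{d})\in\mathbb{Z}_{\geq0}^{d}$, $p_{\alpha}(z)=\prod_{i=1}^{d}(\pi_{i}z)^{\alpha_{i}}$, where $\pi_{i}$ is the $i$-th coordinate, and $|\alpha|=\sum_i\alpha_i$. $\mathcal{I}_{D^{+}}$ is the set of all multi-indices with $|\alpha|\leq D^{+}$. *)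

theory Defs
  imports "HOL-Analysis.Analysis" "Jordan_Normal_Form.DL_Rank"
begin

text \<open>Multi-indices alpha in Z_{>=0}^d are represented as lists of length d.
  multi_indices d D enumerates (without repetition) all multi-indices of length d
  with |alpha| <= D, i.e. the index set I_D.\<close>
fun multi_indices :: "nat \<Rightarrow> nat \<Rightarrow> nat list list" where
  "multi_indices 0 D = [[]]"
| "multi_indices (Suc d) D =
     concat (map (\<lambda>k. map (Cons k) (multi_indices d (D - k))) [0..<Suc D])"

text \<open>Points of R^d are functions nat => real (only coordinates j < d matter).
  p_alpha(z) = prod_j (z_j)^(alpha_j).\<close>
definition monomial_p :: "nat list \<Rightarrow> (nat \<Rightarrow> real) \<Rightarrow> real" where
  "monomial_p \<alpha> z = (\<Prod>j<length \<alpha>. z j ^ (\<alpha> ! j))"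

definition partial_p :: "nat list \<Rightarrow> nat \<Rightarrow> (nat \<Rightarrow> real) \<Rightarrow> real" where
  "partial_p \<alpha> j z = deriv (\<lambda>t. monomial_p \<alpha> (z(j := t))) (z j)"

text \<open>Multivariate Hermite matrix: rows 0..D'-1 are (p_alpha(z_i))_alpha;
  row D' + i*d + j is (d/dx_j p_alpha(z_i))_alpha for i < D', j < d.
  Columns are indexed by the multi-indices in I_{Dp}.\<close>
definition hermite_matrix :: "nat \<Rightarrow> nat \<Rightarrow> nat \<Rightarrow> (nat \<Rightarrow> nat \<Rightarrow> real) \<Rightarrow> real mat" where
  "hermite_matrix d D' Dp z =
     mat (D' * (d + 1)) (length (multi_indices d Dp))
       (\<lambda>(r, c). let \<alpha> = multi_indices d Dp ! c in
          if r < D' then monomial_p \<alpha> (z r)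
          else partial_p \<alpha> ((r - D') mod d) (z ((r - D') div d)))"

end

theory Submission
  imports Defs
begin

text \<open>The columns of the Hermite matrix are the Hermite data (values and gradients at the
  nodes) of the monomials, so its column span contains the Hermite data of every polynomial of
  degree at most Dp. For a node z_i pick, for each other node z_k, a coordinate in which the two
  differ, and let P_i be the product of the squares of the corresponding affine functions
  vanishing at z_k. Then P_i has degree 2(D' - 1), does not vanish at z_i, and vanishes together
  with its gradient at every other node. Hence the Hermite data of (x_j - z_ij) P_i, of degree
  2D' - 1, is a nonzero multiple of the unit vector of the row of the j-th partial derivative at
  z_i, and the Hermite data of P_i is a nonzero multiple of the unit vector of the value row of z_i
  plus derivative rows. So every unit vector lies in the column span.\<close>

unbundle no vec_syntax

section \<open>Partial derivatives\<close>

definition partial_deriv :: "((nat \<Rightarrow> real) \<Rightarrow> real) \<Rightarrow> nat \<Rightarrow> (nat \<Rightarrow> real) \<Rightarrow> real" where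
  "partial_deriv f j w = deriv (\<lambda>t. f (w(j := t))) (w j)"

definition partially_differentiable :: "((nat \<Rightarrow> real) \<Rightarrow> real) \<Rightarrow> bool" where
  "partially_differentiable f \<longleftrightarrow> (\<forall>w j. (\<lambda>t. f (w(j := t))) differentiable (at (w j)))"

lemma partially_differentiable_const: "partially_differentiable (\<lambda>w. c)"
  by (simp add: partially_differentiable_def)

lemma partially_differentiable_coord: "partially_differentiable (\<lambda>w. w l)"
  unfolding partially_differentiable_def
proof (intro allI)
  fix w :: "nat \<Rightarrow> real" and j
  show "(\<lambda>t. (w(j := t)) l) differentiable (at (w j))"
    by (cases "l = j") simp_all
qed

lemma partially_differentiable_add:
  "partially_differentiable f \<Longrightarrow> partially_differentiable g \<Longrightarrow> partially_differentiable (\<lambda>w. f w + g w)"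
  by (simp add: partially_differentiable_def)

lemma partially_differentiable_diff:
  "partially_differentiable f \<Longrightarrow> partially_differentiable g \<Longrightarrow> partially_differentiable (\<lambda>w. f w - g w)"
  by (simp add: partially_differentiable_def)

lemma partially_differentiable_mult:
  "partially_differentiable f \<Longrightarrow> partially_differentiable g \<Longrightarrow> partially_differentiable (\<lambda>w. f w * g w)"
  by (simp add: partially_differentiable_def)

lemma partially_differentiable_power:
  "partially_differentiable f \<Longrightarrow> partially_differentiable (\<lambda>w. f w ^ k)"
  by (simp add: partially_differentiable_def)

lemma partially_differentiable_prod:
  "finite A \<Longrightarrow> (\<And>a. a \<in> A \<Longrightarrow> partially_differentiable (f a)) \<Longrightarrow>
    partially_differentiable (\<lambda>w. \<Prod>a\<in>A. f a w)"
  by (induction A rule: finite_induct)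
    (simp_all add: partially_differentiable_const partially_differentiable_mult)

lemma partially_differentiable_sum:
  "finite A \<Longrightarrow> (\<And>a. a \<in> A \<Longrightarrow> partially_differentiable (f a)) \<Longrightarrow>
    partially_differentiable (\<lambda>w. \<Sum>a\<in>A. f a w)"
  by (induction A rule: finite_induct)
    (simp_all add: partially_differentiable_const partially_differentiable_add)

lemma partially_differentiable_affine: "partially_differentiable (\<lambda>w. w l - c)"
  by (intro partially_differentiable_diff partially_differentiable_coord
      partially_differentiable_const)

lemma partially_differentiable_monomial: "partially_differentiable (monomial_p \<alpha>)"
  unfolding monomial_p_def
  by (intro partially_differentiable_prod partially_differentiable_power
      partially_differentiable_coord) simp

lemma has_partial_deriv:
  "partially_differentiable f \<Longrightarrow>
    ((\<lambda>t. f (w(j := t))) has_field_derivative partial_deriv f j w) (at (w j))"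
  unfolding partial_deriv_def partially_differentiable_def
  using DERIV_deriv_iff_real_differentiable by blast

lemma partial_deriv_mult:
  assumes "partially_differentiable f" "partially_differentiable g"
  shows "partial_deriv (\<lambda>w. f w * g w) j w = partial_deriv f j w * g w + f w * partial_deriv g j w"
proof -
  have "((\<lambda>t. f (w(j := t)) * g (w(j := t))) has_field_derivative
      partial_deriv f j w * g w + partial_deriv g j w * f w) (at (w j))"
    using DERIV_mult[OF has_partial_deriv[OF assms(1), of w j] has_partial_deriv[OF assms(2), of w j]]
    by simp
  then show ?thesis
    unfolding partial_deriv_def[of "\<lambda>w. f w * g w"] by (simp add: DERIV_imp_deriv)
qed

lemma partial_deriv_add:
  assumes "partially_differentiable f" "partially_differentiable g"
  shows "partial_deriv (\<lambda>w. f w + g w) j w = partial_deriv f j w + partial_deriv g j w"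
proof -
  have "((\<lambda>t. f (w(j := t)) + g (w(j := t))) has_field_derivative
      partial_deriv f j w + partial_deriv g j w) (at (w j))"
    using DERIV_add[OF has_partial_deriv[OF assms(1), of w j] has_partial_deriv[OF assms(2), of w j]]
    by simp
  then show ?thesis
    unfolding partial_deriv_def[of "\<lambda>w. f w + g w"] by (simp add: DERIV_imp_deriv)
qed

lemma partial_deriv_const: "partial_deriv (\<lambda>w. c) j w = 0"
  unfolding partial_deriv_def by (simp add: DERIV_imp_deriv)

lemma partial_deriv_affine: "partial_deriv (\<lambda>w. w l - c) j w = (if l = j then 1 else 0)"
proof -
  have "((\<lambda>t. t - c) has_field_derivative 1) (at (w j))"
    by (auto intro!: derivative_eq_intros)
  then show ?thesis
    unfolding partial_deriv_def by (simp add: DERIV_imp_deriv)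
qed

lemma partial_deriv_cmult:
  assumes "partially_differentiable f"
  shows "partial_deriv (\<lambda>w. c * f w) j w = c * partial_deriv f j w"
  using partial_deriv_mult[OF partially_differentiable_const assms] by (simp add: partial_deriv_const)

section \<open>Polynomial functions of bounded degree\<close>

definition multi_index_set :: "nat \<Rightarrow> nat \<Rightarrow> nat list set" where
  "multi_index_set d m = {\<alpha>. length \<alpha> = d \<and> sum_list \<alpha> \<le> m}"

lemma set_multi_indices: "set (multi_indices d m) = multi_index_set d m"
proof (induction d arbitrary: m)
  case 0
  then show ?case by (auto simp: multi_index_set_def)
next
  case (Suc d)
  show ?case
  proof (intro subset_antisym subsetI)
    fix \<alpha> assume "\<alpha> \<in> set (multi_indices (Suc d) m)"
    then obtain k \<beta> where "k \<le> m" "\<alpha> = k # \<beta>" "\<beta> \<in> multi_index_set d (m - k)"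
      using Suc by auto
    then show "\<alpha> \<in> multi_index_set (Suc d) m" by (auto simp: multi_index_set_def)
  next
    fix \<alpha> assume "\<alpha> \<in> multi_index_set (Suc d) m"
    then obtain k \<beta> where "\<alpha> = k # \<beta>" "k \<le> m" "\<beta> \<in> multi_index_set d (m - k)"
      by (cases \<alpha>) (auto simp: multi_index_set_def)
    then show "\<alpha> \<in> set (multi_indices (Suc d) m)"
      using Suc by force
  qed
qed

lemma finite_multi_index_set: "finite (multi_index_set d m)"
  by (metis List.finite_set set_multi_indices)

lemma monomial_p_replicate_zero: "monomial_p (replicate d 0) w = 1"
  by (simp add: monomial_p_def)

lemma monomial_p_increment:
  assumes "l < length \<alpha>"
  shows "monomial_p (\<alpha>[l := \<alpha> ! l + 1]) w = w l * monomial_p \<alpha> w"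
proof -
  have "w j ^ (\<alpha>[l := \<alpha> ! l + 1] ! j) = w j ^ (\<alpha> ! j) * (if j = l then w l else 1)" for j
    using assms by (auto simp: nth_list_update)
  then show ?thesis
    unfolding monomial_p_def using assms by (simp add: prod.distrib)
qed

definition poly_fun :: "nat \<Rightarrow> nat \<Rightarrow> ((nat \<Rightarrow> real) \<Rightarrow> real) \<Rightarrow> bool" where
  "poly_fun d m f \<longleftrightarrow>
    (\<exists>S a. S \<subseteq> multi_index_set d m \<and> f = (\<lambda>w. \<Sum>\<alpha>\<in>S. a \<alpha> * monomial_p \<alpha> w))"

lemma poly_fun_altdef:
  "poly_fun d m f \<longleftrightarrow> (\<exists>a. f = (\<lambda>w. \<Sum>\<alpha>\<in>multi_index_set d m. a \<alpha> * monomial_p \<alpha> w))"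
proof
  assume "poly_fun d m f"
  then obtain S a where S: "S \<subseteq> multi_index_set d m"
    and f: "f = (\<lambda>w. \<Sum>\<alpha>\<in>S. a \<alpha> * monomial_p \<alpha> w)"
    unfolding poly_fun_def by blast
  have "f w = (\<Sum>\<alpha>\<in>multi_index_set d m. (if \<alpha> \<in> S then a \<alpha> else 0) * monomial_p \<alpha> w)" for w
  proof -
    have "f w = (\<Sum>\<alpha>\<in>multi_index_set d m \<inter> S. a \<alpha> * monomial_p \<alpha> w)"
      unfolding f using S by (simp add: Int_absorb1)
    also have "\<dots> = (\<Sum>\<alpha>\<in>multi_index_set d m. (if \<alpha> \<in> S then a \<alpha> * monomial_p \<alpha> w else 0))"
      by (rule sum.inter_restrict[OF finite_multi_index_set])
    finally show ?thesis
      by (simp add: if_distrib[of "\<lambda>x. x * _"] cong: if_cong)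
  qed
  then have "f = (\<lambda>w. \<Sum>\<alpha>\<in>multi_index_set d m. (if \<alpha> \<in> S then a \<alpha> else 0) * monomial_p \<alpha> w)"
    by (rule ext)
  then show "\<exists>a. f = (\<lambda>w. \<Sum>\<alpha>\<in>multi_index_set d m. a \<alpha> * monomial_p \<alpha> w)"
    by (rule exI[where x = "\<lambda>\<alpha>. if \<alpha> \<in> S then a \<alpha> else 0"])
qed (auto simp: poly_fun_def)

lemma poly_fun_const: "poly_fun d m (\<lambda>w. c)"
  unfolding poly_fun_def
  by (intro exI[of _ "{replicate d 0}"] exI[of _ "\<lambda>_. c"])
    (simp add: multi_index_set_def monomial_p_replicate_zero sum_list_replicate)

lemma poly_fun_mono:
  assumes "poly_fun d m f" "m \<le> m'"
  shows "poly_fun d m' f"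
proof -
  have "multi_index_set d m \<subseteq> multi_index_set d m'"
    using assms(2) by (auto simp: multi_index_set_def)
  with assms(1) show ?thesis
    unfolding poly_fun_def by blast
qed

lemma poly_fun_add:
  assumes "poly_fun d m f" "poly_fun d m g"
  shows "poly_fun d m (\<lambda>w. f w + g w)"
proof -
  obtain a b where "f = (\<lambda>w. \<Sum>\<alpha>\<in>multi_index_set d m. a \<alpha> * monomial_p \<alpha> w)"
    "g = (\<lambda>w. \<Sum>\<alpha>\<in>multi_index_set d m. b \<alpha> * monomial_p \<alpha> w)"
    using assms unfolding poly_fun_altdef by blast
  then show ?thesis
    unfolding poly_fun_altdef
    by (intro exI[of _ "\<lambda>\<alpha>. a \<alpha> + b \<alpha>"]) (simp add: distrib_right sum.distrib)
qed

lemma poly_fun_cmult: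
  assumes "poly_fun d m f"
  shows "poly_fun d m (\<lambda>w. c * f w)"
proof -
  obtain a where "f = (\<lambda>w. \<Sum>\<alpha>\<in>multi_index_set d m. a \<alpha> * monomial_p \<alpha> w)"
    using assms unfolding poly_fun_altdef by blast
  then show ?thesis
    unfolding poly_fun_altdef
    by (intro exI[of _ "\<lambda>\<alpha>. c * a \<alpha>"]) (simp add: sum_distrib_left mult.assoc)
qed

lemma poly_fun_mult_coord:
  assumes f: "poly_fun d m f" and l: "l < d"
  shows "poly_fun d (Suc m) (\<lambda>w. w l * f w)"
proof -
  obtain a where f_eq: "f = (\<lambda>w. \<Sum>\<alpha>\<in>multi_index_set d m. a \<alpha> * monomial_p \<alpha> w)"
    using f unfolding poly_fun_altdef by blast
  define inc where "inc \<alpha> = \<alpha>[l := \<alpha> ! l + 1]" for \<alpha> :: "nat list"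
  define dec where "dec \<alpha> = \<alpha>[l := \<alpha> ! l - 1]" for \<alpha> :: "nat list"
  have dec_inc: "dec (inc \<alpha>) = \<alpha>" if "\<alpha> \<in> multi_index_set d m" for \<alpha>
    using that l by (auto simp: inc_def dec_def multi_index_set_def)
  then have inj: "inj_on inc (multi_index_set d m)"
    by (rule inj_on_inverseI)
  have monomial_p_inc: "monomial_p (inc \<alpha>) w = w l * monomial_p \<alpha> w"
    if "\<alpha> \<in> multi_index_set d m" for \<alpha> w
    using that l monomial_p_increment[of l \<alpha> w] by (simp add: inc_def multi_index_set_def)
  have inc_mem: "inc ` multi_index_set d m \<subseteq> multi_index_set d (Suc m)"
    using l by (auto simp: inc_def multi_index_set_def sum_list_update)
  have "w l * f w = (\<Sum>\<beta>\<in>inc ` multi_index_set d m. a (dec \<beta>) * monomial_p \<beta> w)" for w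
  proof -
    have "w l * f w = (\<Sum>\<alpha>\<in>multi_index_set d m. a \<alpha> * (w l * monomial_p \<alpha> w))"
      unfolding f_eq by (simp add: sum_distrib_left mult.left_commute)
    also have "\<dots> = (\<Sum>\<alpha>\<in>multi_index_set d m. a (dec (inc \<alpha>)) * monomial_p (inc \<alpha>) w)"
      by (intro sum.cong) (simp_all add: dec_inc monomial_p_inc)
    also have "\<dots> = (\<Sum>\<beta>\<in>inc ` multi_index_set d m. a (dec \<beta>) * monomial_p \<beta> w)"
      by (simp add: sum.reindex[OF inj])
    finally show ?thesis .
  qed
  then have "(\<lambda>w. w l * f w) = (\<lambda>w. \<Sum>\<beta>\<in>inc ` multi_index_set d m. a (dec \<beta>) * monomial_p \<beta> w)"
    by (rule ext)
  with inc_mem show ?thesis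
    unfolding poly_fun_def by (intro exI[of _ "inc ` multi_index_set d m"] exI[of _ "a \<circ> dec"]) simp
qed

lemma poly_fun_mult_affine:
  assumes "poly_fun d m f" "l < d"
  shows "poly_fun d (Suc m) (\<lambda>w. (w l - c) * f w)"
proof -
  have "poly_fun d (Suc m) (\<lambda>w. w l * f w + (- c) * f w)"
    using assms by (intro poly_fun_add poly_fun_mult_coord poly_fun_cmult poly_fun_mono[OF assms(1)]) simp_all
  then show ?thesis
    by (simp add: algebra_simps)
qed

lemma poly_fun_prod_squared_affine:
  assumes "finite K" "\<And>k. k \<in> K \<Longrightarrow> l k < d"
  shows "poly_fun d (2 * card K) (\<lambda>w. \<Prod>k\<in>K. (w (l k) - c k) * (w (l k) - c k))"
  using assms
proof (induction K rule: finite_induct)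
  case empty
  then show ?case by (simp add: poly_fun_const)
next
  case (insert x K)
  then have "poly_fun d (Suc (Suc (2 * card K)))
      (\<lambda>w. (w (l x) - c x) * ((w (l x) - c x) * (\<Prod>k\<in>K. (w (l k) - c k) * (w (l k) - c k))))"
    by (intro poly_fun_mult_affine) auto
  moreover have "2 * card (insert x K) = Suc (Suc (2 * card K))"
    using insert(1,2) by simp
  ultimately show ?case
    by (simp only: prod.insert[OF insert(1,2)] mult.assoc)
qed

lemma poly_fun_partially_differentiable: "poly_fun d m f \<Longrightarrow> partially_differentiable f"
  unfolding poly_fun_def
  by (auto intro!: partially_differentiable_sum partially_differentiable_mult
      partially_differentiable_const partially_differentiable_monomial
      intro: finite_subset[OF _ finite_multi_index_set])

section \<open>Unit vectors in a span\<close>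

context vec_space
begin

lemma rank_eq_dim_if_unit_vecs_in_col_span:
  assumes A: "A \<in> carrier_mat n nc"
    and units: "\<And>r. r < n \<Longrightarrow> unit_vec n r \<in> span (set (cols A))"
  shows "rank A = n"
proof -
  have W: "set (cols A) \<subseteq> carrier_vec n"
    using A cols_dim by blast
  have "carrier_vec n = span (set (unit_vecs n))"
    by (rule span_unit_vecs_is_carrier[symmetric])
  also have "\<dots> \<subseteq> span (set (cols A))"
    using units by (intro span_subsetI[OF W]) (auto simp: unit_vecs_def)
  finally have "span (set (cols A)) = carrier_vec n"
    using span_is_subset2[OF W] by blast
  then have "rank A = vectorspace.dim class_ring (V\<lparr>carrier := carrier_vec n\<rparr>)"
    unfolding rank_def by simp
  also have "V\<lparr>carrier := carrier_vec n\<rparr> = V"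
    by (simp add: module_vec_def)
  finally show ?thesis
    using dim_is_n by simp
qed

lemma supported_vec_in_span:
  assumes W: "W \<subseteq> carrier_vec n" and R: "finite R" "R \<subseteq> {..<n}"
    and units: "\<And>r. r \<in> R \<Longrightarrow> unit_vec n r \<in> span W"
  shows "vec n (\<lambda>k. if k \<in> R then f k else 0) \<in> span W"
  using R units
proof (induction R rule: finite_induct)
  case empty
  then show ?case
    using sumlist_in_span[OF W, of "[]"] by (simp add: zero_vec_def)
next
  case (insert x R)
  have "f x \<cdot>\<^sub>v unit_vec n x + vec n (\<lambda>k. if k \<in> R then f k else 0) \<in> span W"
    using insert by (intro span_add1[OF W] smult_in_span[OF W]) auto
  moreover have "f x \<cdot>\<^sub>v unit_vec n x + vec n (\<lambda>k. if k \<in> R then f k else 0)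
      = vec n (\<lambda>k. if k \<in> insert x R then f k else 0)"
    using insert by (intro eq_vecI) auto
  ultimately show ?case
    by simp
qed

lemma unit_vec_in_spanI:
  assumes W: "W \<subseteq> carrier_vec n" and v: "v \<in> span W" and i: "i < n" "v $ i \<noteq> 0"
    and others: "\<And>r. r < n \<Longrightarrow> r \<noteq> i \<Longrightarrow> v $ r \<noteq> 0 \<Longrightarrow> unit_vec n r \<in> span W"
  shows "unit_vec n i \<in> span W"
proof -
  define R where "R = {r. r < n \<and> r \<noteq> i \<and> v $ r \<noteq> 0}"
  define u where "u = vec n (\<lambda>k. if k \<in> R then - v $ k else 0)"
  have "u \<in> span W"
    unfolding u_def by (rule supported_vec_in_span[OF W]) (auto simp: R_def others)
  then have "v + u \<in> span W"
    using span_add1[OF W v] by simp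
  then have "(1 / v $ i) \<cdot>\<^sub>v (v + u) \<in> span W"
    by (rule smult_in_span[OF W])
  moreover have "(1 / v $ i) \<cdot>\<^sub>v (v + u) = unit_vec n i"
    using span_closed[OF W v] i by (intro eq_vecI) (auto simp: u_def R_def)
  ultimately show ?thesis
    by simp
qed

end

section \<open>Hermite data of polynomial functions\<close>

locale hermite_nodes =
  fixes d D' :: nat and z :: "nat \<Rightarrow> nat \<Rightarrow> real"
begin

abbreviation col_span :: "real mat \<Rightarrow> real vec set" where
  "col_span A \<equiv> LinearCombinations.module.span class_ring (module_vec TYPE(real) (D' * (d + 1)))
     (set (cols A))"

definition hermite_data :: "((nat \<Rightarrow> real) \<Rightarrow> real) \<Rightarrow> real vec" where
  "hermite_data f = vec (D' * (d + 1)) (\<lambda>r. if r < D' then f (z r)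
     else partial_deriv f ((r - D') mod d) (z ((r - D') div d)))"

lemma dim_hermite_data [simp]: "dim_vec (hermite_data f) = D' * (d + 1)"
  by (simp add: hermite_data_def)

lemma hermite_data_value_row: "r < D' \<Longrightarrow> hermite_data f $ r = f (z r)"
  by (simp add: hermite_data_def trans_less_add1)

lemma derivative_row_less:
  assumes "k < D'" "j < d"
  shows "D' + k * d + j < D' * (d + 1)"
proof -
  have "k * d + j < (k + 1) * d"
    using assms(2) by simp
  also have "\<dots> \<le> D' * d"
    using assms(1) by (intro mult_right_mono) auto
  finally show ?thesis
    by simp
qed

lemma hermite_data_derivative_row:
  assumes "k < D'" "j < d"
  shows "hermite_data f $ (D' + k * d + j) = partial_deriv f j (z k)"
  using derivative_row_less[OF assms] assms(2) by (simp add: hermite_data_def)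

lemma derivative_row_inject:
  assumes "j < d" "j' < d"
  shows "D' + k * d + j = D' + i * d + j' \<longleftrightarrow> k = i \<and> j = j'"
proof
  assume "D' + k * d + j = D' + i * d + j'"
  then have "(k * d + j) div d = (i * d + j') div d" "(k * d + j) mod d = (i * d + j') mod d"
    by simp_all
  with assms show "k = i \<and> j = j'"
    by simp
qed simp

lemma derivative_rowE:
  assumes "D' \<le> r" "r < D' * (d + 1)"
  obtains k j where "k < D'" "j < d" "r = D' + k * d + j"
proof
  have "r - D' < D' * d"
    using assms by simp
  moreover from this have "d > 0"
    by (cases d) auto
  ultimately show "(r - D') div d < D'" "(r - D') mod d < d"
    by (simp_all add: less_mult_imp_div_less mult.commute)
  show "r = D' + (r - D') div d * d + (r - D') mod d"
    using assms(1) by simp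
qed

lemma cols_hermite_matrix_carrier:
  "set (cols (hermite_matrix d D' Dp z)) \<subseteq> carrier_vec (D' * (d + 1))"
  using cols_dim[of "hermite_matrix d D' Dp z"] by (simp add: hermite_matrix_def)

lemma hermite_data_lincomb:
  assumes "partially_differentiable f" "partially_differentiable g"
  shows "hermite_data (\<lambda>w. c * f w + g w) = c \<cdot>\<^sub>v hermite_data f + hermite_data g"
  using assms
  by (intro eq_vecI) (simp_all add: hermite_data_def partial_deriv_add partial_deriv_cmult
      partially_differentiable_mult partially_differentiable_const)

lemma col_hermite_matrix:
  "c < length (multi_indices d Dp) \<Longrightarrow>
    col (hermite_matrix d D' Dp z) c = hermite_data (monomial_p (multi_indices d Dp ! c))"
  by (intro eq_vecI) (simp_all add: hermite_matrix_def hermite_data_def partial_p_def partial_deriv_def)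

lemma hermite_data_in_col_span:
  assumes "poly_fun d Dp f"
  shows "hermite_data f \<in> col_span (hermite_matrix d D' Dp z)"
proof -
  interpret V: vec_space "TYPE(real)" "D' * (d + 1)" .
  let ?W = "set (cols (hermite_matrix d D' Dp z))"
  note W = cols_hermite_matrix_carrier
  have "hermite_data (\<lambda>w. \<Sum>\<alpha>\<in>S. a \<alpha> * monomial_p \<alpha> w) \<in> col_span (hermite_matrix d D' Dp z)"
    if "finite S" "S \<subseteq> set (multi_indices d Dp)" for S a
    using that
  proof (induction S rule: finite_induct)
    case empty
    have "hermite_data (\<lambda>w. 0) = 0\<^sub>v (D' * (d + 1))"
      by (intro eq_vecI) (simp_all add: hermite_data_def partial_deriv_const)
    then show ?case
      using V.supported_vec_in_span[OF W, of "{}"] by (simp add: zero_vec_def)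
  next
    case (insert \<alpha> S)
    obtain c where c: "c < length (multi_indices d Dp)" "\<alpha> = multi_indices d Dp ! c"
      using insert(4) by (auto simp: in_set_conv_nth)
    then have "col (hermite_matrix d D' Dp z) c \<in> ?W"
      by (simp add: cols_def hermite_matrix_def)
    then have "hermite_data (monomial_p \<alpha>) \<in> ?W"
      using c by (simp add: col_hermite_matrix)
    then have "a \<alpha> \<cdot>\<^sub>v hermite_data (monomial_p \<alpha>)
        + hermite_data (\<lambda>w. \<Sum>\<alpha>\<in>S. a \<alpha> * monomial_p \<alpha> w) \<in> col_span (hermite_matrix d D' Dp z)"
      using insert V.in_own_span[OF W] by (intro V.span_add1[OF W] V.smult_in_span[OF W]) auto
    then show ?case
      using insert(1,2)
      by (simp add: hermite_data_lincomb partially_differentiable_monomial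
          partially_differentiable_sum partially_differentiable_mult partially_differentiable_const)
  qed
  moreover obtain a where "f = (\<lambda>w. \<Sum>\<alpha>\<in>set (multi_indices d Dp). a \<alpha> * monomial_p \<alpha> w)"
    using assms unfolding poly_fun_altdef set_multi_indices by blast
  ultimately show ?thesis
    by simp
qed

end

section \<open>Separating polynomials\<close>

locale separated_hermite_nodes = hermite_nodes +
  assumes separated: "\<forall>i<D'. \<forall>i'<D'. i \<noteq> i' \<longrightarrow> (\<exists>j<d. z i j \<noteq> z i' j)"
begin

definition separating_coord :: "nat \<Rightarrow> nat \<Rightarrow> nat" where
  "separating_coord i k = (SOME j. j < d \<and> z i j \<noteq> z k j)"

lemma separating_coord:
  assumes "i < D'" "k < D'" "k \<noteq> i"
  shows "separating_coord i k < d" "z i (separating_coord i k) \<noteq> z k (separating_coord i k)"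
proof -
  have "\<exists>j. j < d \<and> z i j \<noteq> z k j"
    using separated assms by metis
  then show "separating_coord i k < d" "z i (separating_coord i k) \<noteq> z k (separating_coord i k)"
    unfolding separating_coord_def by (metis (mono_tags, lifting) someI_ex)+
qed

definition node_poly :: "nat \<Rightarrow> (nat \<Rightarrow> real) \<Rightarrow> real" where
  "node_poly i w = (\<Prod>k\<in>{..<D'} - {i}.
     (w (separating_coord i k) - z k (separating_coord i k)) *
     (w (separating_coord i k) - z k (separating_coord i k)))"

lemma poly_fun_node_poly:
  assumes "i < D'"
  shows "poly_fun d (2 * (D' - 1)) (node_poly i)"
proof -
  have "poly_fun d (2 * card ({..<D'} - {i})) (node_poly i)"
    unfolding node_poly_def[abs_def]
    by (rule poly_fun_prod_squared_affine) (use separating_coord assms in auto)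
  then show ?thesis
    using assms by simp
qed

lemma node_poly_own_node: "i < D' \<Longrightarrow> node_poly i (z i) \<noteq> 0"
  unfolding node_poly_def using separating_coord by auto

lemma node_poly_other_node: "i < D' \<Longrightarrow> k < D' \<Longrightarrow> k \<noteq> i \<Longrightarrow> node_poly i (z k) = 0"
  unfolding node_poly_def by (auto intro!: bexI[of _ k])

lemma partial_deriv_node_poly_other_node:
  assumes ik: "i < D'" "k < D'" "k \<noteq> i"
  shows "partial_deriv (node_poly i) j (z k) = 0"
proof -
  define h where "h w = w (separating_coord i k) - z k (separating_coord i k)" for w
  define q where "q w = (\<Prod>k'\<in>{..<D'} - {i} - {k}.
    (w (separating_coord i k') - z k' (separating_coord i k')) *
    (w (separating_coord i k') - z k' (separating_coord i k')))" for w
  have node_poly_eq: "node_poly i = (\<lambda>w. (h w * h w) * q w)"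
    unfolding node_poly_def h_def q_def using ik by (intro ext) (simp add: prod.remove[of _ k])
  have h: "partially_differentiable h"
    unfolding h_def[abs_def] by (rule partially_differentiable_affine)
  have q: "partially_differentiable q"
    unfolding q_def[abs_def]
    by (intro partially_differentiable_prod partially_differentiable_mult
        partially_differentiable_affine) simp
  have "h (z k) = 0"
    by (simp add: h_def)
  then show ?thesis
    unfolding node_poly_eq
    using partial_deriv_mult[OF partially_differentiable_mult[OF h h] q] partial_deriv_mult[OF h h]
    by simp
qed

lemma hermite_data_derivative_poly:
  assumes i: "i < D'" and j: "j < d"
  shows "hermite_data (\<lambda>w. (w j - z i j) * node_poly i w)
    = node_poly i (z i) \<cdot>\<^sub>v unit_vec (D' * (d + 1)) (D' + i * d + j)"
proof (rule eq_vecI)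
  fix r
  assume "r < dim_vec (node_poly i (z i) \<cdot>\<^sub>v unit_vec (D' * (d + 1)) (D' + i * d + j))"
  then have r: "r < D' * (d + 1)"
    by simp
  have node_poly: "partially_differentiable (node_poly i)"
    using poly_fun_partially_differentiable[OF poly_fun_node_poly[OF i]] .
  show "hermite_data (\<lambda>w. (w j - z i j) * node_poly i w) $ r
    = (node_poly i (z i) \<cdot>\<^sub>v unit_vec (D' * (d + 1)) (D' + i * d + j)) $ r"
  proof (cases "r < D'")
    case True
    then show ?thesis
      using r i node_poly_other_node[OF i True]
      by (auto simp: hermite_data_value_row unit_vec_def)
  next
    case False
    then have "D' \<le> r"
      by simp
    then obtain k j' where k: "k < D'" "j' < d" "r = D' + k * d + j'"
      using r by (rule derivative_rowE)
    have "hermite_data (\<lambda>w. (w j - z i j) * node_poly i w) $ r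
      = (if j = j' then node_poly i (z k) else 0) + (z k j - z i j) * partial_deriv (node_poly i) j' (z k)"
      using k by (simp add: hermite_data_derivative_row partial_deriv_affine
          partial_deriv_mult[OF partially_differentiable_affine node_poly])
    moreover have "(node_poly i (z i) \<cdot>\<^sub>v unit_vec (D' * (d + 1)) (D' + i * d + j)) $ r
      = (if k = i \<and> j' = j then node_poly i (z i) else 0)"
      using r k j by (simp add: unit_vec_def derivative_row_inject)
    ultimately show ?thesis
      using node_poly_other_node[OF i k(1)] partial_deriv_node_poly_other_node[OF i k(1)] by auto
  qed
qed simp

lemma derivative_unit_vec_in_col_span:
  assumes degree: "2 * D' \<le> Dp + 1" and i: "i < D'" and j: "j < d"
  shows "unit_vec (D' * (d + 1)) (D' + i * d + j) \<in> col_span (hermite_matrix d D' Dp z)"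
proof (rule vec_space.unit_vec_in_spanI[OF cols_hermite_matrix_carrier])
  let ?g = "\<lambda>w. (w j - z i j) * node_poly i w"
  have "poly_fun d (Suc (2 * (D' - 1))) ?g"
    using poly_fun_node_poly[OF i] j by (rule poly_fun_mult_affine)
  then have "poly_fun d Dp ?g"
    using degree i by (elim poly_fun_mono) linarith
  then show "hermite_data ?g \<in> col_span (hermite_matrix d D' Dp z)"
    by (rule hermite_data_in_col_span)
  show "D' + i * d + j < D' * (d + 1)"
    using i j by (rule derivative_row_less)
  then show "hermite_data ?g $ (D' + i * d + j) \<noteq> 0"
    using node_poly_own_node[OF i] by (simp add: hermite_data_derivative_poly[OF i j])
  show "unit_vec (D' * (d + 1)) r \<in> col_span (hermite_matrix d D' Dp z)"
    if "r < D' * (d + 1)" "r \<noteq> D' + i * d + j" "hermite_data ?g $ r \<noteq> 0" for r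
    using that by (simp add: hermite_data_derivative_poly[OF i j] unit_vec_def)
qed

lemma value_unit_vec_in_col_span:
  assumes degree: "2 * D' \<le> Dp + 1" and i: "i < D'"
  shows "unit_vec (D' * (d + 1)) i \<in> col_span (hermite_matrix d D' Dp z)"
proof (rule vec_space.unit_vec_in_spanI[OF cols_hermite_matrix_carrier])
  have "poly_fun d Dp (node_poly i)"
    using poly_fun_node_poly[OF i] degree i by (elim poly_fun_mono) linarith
  then show "hermite_data (node_poly i) \<in> col_span (hermite_matrix d D' Dp z)"
    by (rule hermite_data_in_col_span)
  show "i < D' * (d + 1)"
    using i by (simp add: trans_less_add1)
  show "hermite_data (node_poly i) $ i \<noteq> 0"
    using i node_poly_own_node[OF i] by (simp add: hermite_data_value_row)
  fix r
  assume r: "r < D' * (d + 1)" "r \<noteq> i" "hermite_data (node_poly i) $ r \<noteq> 0"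
  then have "D' \<le> r"
    using node_poly_other_node[OF i] by (metis hermite_data_value_row not_le)
  then obtain k j where "k < D'" "j < d" "r = D' + k * d + j"
    using r(1) by (rule derivative_rowE)
  then show "unit_vec (D' * (d + 1)) r \<in> col_span (hermite_matrix d D' Dp z)"
    using derivative_unit_vec_in_col_span[OF degree] by blast
qed

lemma rank_hermite_matrix:
  assumes "2 * D' \<le> Dp + 1"
  shows "vec_space.rank (D' * (d + 1)) (hermite_matrix d D' Dp z) = D' * (d + 1)"
proof (rule vec_space.rank_eq_dim_if_unit_vecs_in_col_span)
  show "hermite_matrix d D' Dp z \<in> carrier_mat (D' * (d + 1)) (length (multi_indices d Dp))"
    by (simp add: hermite_matrix_def)
  fix r
  assume r: "r < D' * (d + 1)"
  show "unit_vec (D' * (d + 1)) r \<in> col_span (hermite_matrix d D' Dp z)"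
  proof (cases "r < D'")
    case True
    then show ?thesis
      by (rule value_unit_vec_in_col_span[OF assms])
  next
    case False
    then have "D' \<le> r"
      by simp
    then obtain k j where "k < D'" "j < d" "r = D' + k * d + j"
      using r by (rule derivative_rowE)
    then show ?thesis
      using derivative_unit_vec_in_col_span[OF assms] by blast
  qed
qed

end

theorem lemma5:
  fixes d D' Dp :: nat and z :: "nat \<Rightarrow> nat \<Rightarrow> real"
  assumes distinct: "\<forall>i<D'. \<forall>i'<D'. i \<noteq> i' \<longrightarrow> (\<exists>j<d. z i j \<noteq> z i' j)"
    and deg: "int Dp \<ge> 2 * int D' - 1"
  shows "vec_space.rank (D' * (d + 1)) (hermite_matrix d D' Dp z) = D' * (d + 1)"
proof -
  interpret separated_hermite_nodes d D' z
    using distinct by unfold_locales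
  have "2 * D' \<le> Dp + 1"
    using deg by linarith
  then show ?thesis
    by (rule rank_hermite_matrix)
qed

end
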